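(* For every $\phi\in\mathcal{L}$ and every segment $\mathfrak{s}$ of the canonical model $\mathfrak{M}^{C}$: (1) $\mathfrak{M}^{C},\mathfrak{s}\Vdash^+\phi$ iff $\phi\in\mathbf{h}(\mathfrak{s})$; (2) $\mathfrak{M}^{C},\mathfrak{s}\Vdash^-\phi$ iff ${\sim}\phi\in\mathbf{h}(\mathfrak{s})$.
   Context: Fix a countable set $\mathsf{Prop}$ of propositional variables. The language $\mathcal{L}$ is given by the grammar $\phi::=p\mid{\sim}\phi\mid(\phi\wedge\phi)\mid(\phi\vee\phi)\mid(\phi\to\phi)\mid\Box\phi\mid\Diamond\phi$ with $p\in\mathsf{Prop}$. $\phi\leftrightarrow\chi$ abbreviates $(\phi\to\chi)\wedge(\chi\to\phi)$. Semantics. A structure $\langle W,\le,R^+_\Box,R^-_\Box,R^+_\Diamond,R^-_\Diamond,v^+,v^-\rangle$ with $W\ne\varnothing$, $\le$ a preorder, four arbitrary binary relations, and $v^+,v^-:\mathsf{Prop}\to2^W$ upward closed under $\le$ is a $\mathsf{CN4K}$ model; $R(w)=\{w'\mid wRw'\}$. Support: $w\Vdash^\pm p$ iff $w\in v^\pm(p)$; $w\Vdash^+{\sim}\phi$ iff $w\Vdash^-\phi$; $w\Vdash^-{\sim}\phi$ iff $w\Vdash^+\phi$; $w\Vdash^+\phi\wedge\chi$ iff both; $w\Vdash^-\phi\wedge\chi$ iff $w\Vdash^-\phi$ or $w\Vdash^-\chi$; $w\Vdash^+\phi\vee\chi$ iff $w\Vdash^+\phi$ or $w\Vdash^+\chi$;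 $w\Vdash^-\phi\vee\chi$ iff both negatively supported; $w\Vdash^+\phi\to\chi$ iff for all $w'\ge w$, $w'\Vdash^+\phi$ implies $w'\Vdash^+\chi$; $w\Vdash^-\phi\to\chi$ iff $w\Vdash^+\phi$ and $w\Vdash^-\chi$; $w\Vdash^+\Box\phi$ iff $\forall w'\ge w\ \forall w''\in R^+_\Box(w')$: $w''\Vdash^+\phi$; $w\Vdash^-\Box\phi$ iff $\forall w'\ge w\ \exists w''\in R^-_\Box(w')$: $w''\Vdash^-\phi$; $w\Vdash^+\Diamond\phi$ iff $\forall w'\ge w\ \exists w''\in R^+_\Diamond(w')$: $w''\Vdash^+\phi$; $w\Vdash^-\Diamond\phi$ iff $\forall w'\ge w\ \forall w''\in R^-_\Diamond(w')$: $w''\Vdash^-\phi$. Calculus. $\mathcal{H}\mathsf{N4}$ has as axioms all $\mathcal{L}$-instances of: $\phi\to(\chi\to\phi)$; $(\phi\to(\chi\to\psi))\to((\phi\to\chi)\to(\phi\to\psi))$; $\phi\wedge\chi\to\phi$; $\phi\wedge\chi\to\chi$; $\phi\to(\chi\to\phi\wedge\chi)$; $\phi\to\phi\vee\chi$; $\chi\to\phi\vee\chi$; $(\phi\to\psi)\to((\chi\to\psi)\to(\phi\vee\chi\to\psi))$; ${\sim}{\sim}\phi\leftrightarrow\phi$; ${\sim}(\phi\wedge\chi)\leftrightarrow({\sim}\phi\vee{\sim}\chi)$; ${\sim}(\phi\vee\chi)\leftrightarrow({\sim}\phi\wedge{\sim}\chi)$; ${\sim}(\phi\to\chi)\leftrightarrow(\phi\wedge{\sim}\chi)$;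 and modus ponens. $\mathcal{H}\mathsf{CN4K}$ adds the axiom schemes $\Box(\phi\to\phi)$; ${\sim}\Diamond{\sim}(\phi\to\phi)$; $(\Box\phi\wedge\Box\chi)\to\Box(\phi\wedge\chi)$; $({\sim}\Diamond\phi\wedge{\sim}\Diamond\chi)\to{\sim}\Diamond(\phi\vee\chi)$, and the rules: from $\vdash\phi\to\chi$ infer $\vdash\Box\phi\to\Box\chi$; from $\vdash\phi\to\chi$ infer $\vdash\Diamond\phi\to\Diamond\chi$; from $\vdash{\sim}\phi\to{\sim}\chi$ infer $\vdash{\sim}\Box\phi\to{\sim}\Box\chi$; from $\vdash{\sim}\phi\to{\sim}\chi$ infer $\vdash{\sim}\Diamond\phi\to{\sim}\Diamond\chi$. $\Gamma\vdash_{\mathcal{H}\mathsf{CN4K}}\phi$ means there is a finite sequence ending in $\phi$ of axiom instances, members of $\Gamma$, and rule consequences of earlier members, the modal rules being applied only to theorems. A set $\Xi\subseteq\mathcal{L}$ is saturated if it is deductively closed under $\vdash_{\mathcal{H}\mathsf{CN4K}}$ and prime ($\xi\vee\xi'\in\Xi$ implies $\xi\in\Xi$ or $\xi'\in\Xi$). A segment is a tuple $\mathfrak{s}=\langle\Xi,\Phi^+_\Box,\Phi^-_\Box,\Phi^+_\Diamond,\Phi^-_\Diamond\rangle$ where $\Xi$ is a saturated set (the head, $\mathbf{h}(\mathfrak{s})=\Xi$) and each $\Phi^\bullet_\heartsuit$ is a set (possibly empty) of saturated sets such that: if $\Box\phi\in\Xi$ then $\phi\in\Delta$ for every $\Delta\in\Phi^+_\Box$;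 if ${\sim}\Box\phi\in\Xi$ then ${\sim}\phi\in\Delta$ for some $\Delta\in\Phi^-_\Box$; if $\Diamond\phi\in\Xi$ then $\phi\in\Delta$ for some $\Delta\in\Phi^+_\Diamond$; if ${\sim}\Diamond\phi\in\Xi$ then ${\sim}\phi\in\Delta$ for every $\Delta\in\Phi^-_\Diamond$. The canonical model $\mathfrak{M}^{C}$ has as states all segments, $\mathfrak{s}\le^{C}\mathfrak{s}'$ iff $\mathbf{h}(\mathfrak{s})\subseteq\mathbf{h}(\mathfrak{s}')$, $\mathfrak{s}\,{R^\bullet_\heartsuit}^{C}\,\mathfrak{s}'$ iff $\mathbf{h}(\mathfrak{s}')\in\Phi^\bullet_\heartsuit$ (where $\Phi^\bullet_\heartsuit$ is the corresponding component of $\mathfrak{s}$), for $\bullet\in\{+,-\}$, $\heartsuit\in\{\Box,\Diamond\}$; $\mathfrak{s}\in {v^+}^{C}(p)$ iff $p\in\mathbf{h}(\mathfrak{s})$, and $\mathfrak{s}\in{v^-}^{C}(p)$ iff ${\sim}p\in\mathbf{h}(\mathfrak{s})$. *)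

theory Defs
  imports Main "HOL-Library.Countable"
begin

datatype 'a fm =
    Atom 'a
  | Neg "'a fm"
  | Conj "'a fm" "'a fm"
  | Disj "'a fm" "'a fm"
  | Imp "'a fm" "'a fm"
  | Box "'a fm"
  | Dia "'a fm"

definition Iff :: "'a fm \<Rightarrow> 'a fm \<Rightarrow> 'a fm" where
  "Iff \<phi> \<chi> = Conj (Imp \<phi> \<chi>) (Imp \<chi> \<phi>)"

inductive Ax :: "'a fm \<Rightarrow> bool" where
  A1: "Ax (Imp \<phi> (Imp \<chi> \<phi>))"
| A2: "Ax (Imp (Imp \<phi> (Imp \<chi> \<psi>)) (Imp (Imp \<phi> \<chi>) (Imp \<phi> \<psi>)))"
| A3: "Ax (Imp (Conj \<phi> \<chi>) \<phi>)"
| A4: "Ax (Imp (Conj \<phi> \<chi>) \<chi>)"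
| A5: "Ax (Imp \<phi> (Imp \<chi> (Conj \<phi> \<chi>)))"
| A6: "Ax (Imp \<phi> (Disj \<phi> \<chi>))"
| A7: "Ax (Imp \<chi> (Disj \<phi> \<chi>))"
| A8: "Ax (Imp (Imp \<phi> \<psi>) (Imp (Imp \<chi> \<psi>) (Imp (Disj \<phi> \<chi>) \<psi>)))"
| A9: "Ax (Iff (Neg (Neg \<phi>)) \<phi>)"
| A10: "Ax (Iff (Neg (Conj \<phi> \<chi>)) (Disj (Neg \<phi>) (Neg \<chi>)))"
| A11: "Ax (Iff (Neg (Disj \<phi> \<chi>)) (Conj (Neg \<phi>) (Neg \<chi>)))"
| A12: "Ax (Iff (Neg (Imp \<phi> \<chi>)) (Conj \<phi> (Neg \<chi>)))"
| K1: "Ax (Box (Imp \<phi> \<phi>))"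
| K2: "Ax (Neg (Dia (Neg (Imp \<phi> \<phi>))))"
| K3: "Ax (Imp (Conj (Box \<phi>) (Box \<chi>)) (Box (Conj \<phi> \<chi>)))"
| K4: "Ax (Imp (Conj (Neg (Dia \<phi>)) (Neg (Dia \<chi>))) (Neg (Dia (Disj \<phi> \<chi>))))"

text \<open>Derivability from premises; the modal rules apply only to theorems
  (formulas derivable from the empty set).\<close>
inductive derives :: "'a fm set \<Rightarrow> 'a fm \<Rightarrow> bool" where
  ax: "Ax \<phi> \<Longrightarrow> derives \<Gamma> \<phi>"
| hyp: "\<phi> \<in> \<Gamma> \<Longrightarrow> derives \<Gamma> \<phi>"
| mp: "derives \<Gamma> (Imp \<phi> \<chi>) \<Longrightarrow> derives \<Gamma> \<phi> \<Longrightarrow> derives \<Gamma> \<chi>"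
| RBoxP: "derives {} (Imp \<phi> \<chi>) \<Longrightarrow> derives \<Gamma> (Imp (Box \<phi>) (Box \<chi>))"
| RDiaP: "derives {} (Imp \<phi> \<chi>) \<Longrightarrow> derives \<Gamma> (Imp (Dia \<phi>) (Dia \<chi>))"
| RBoxN: "derives {} (Imp (Neg \<phi>) (Neg \<chi>)) \<Longrightarrow> derives \<Gamma> (Imp (Neg (Box \<phi>)) (Neg (Box \<chi>)))"
| RDiaN: "derives {} (Imp (Neg \<phi>) (Neg \<chi>)) \<Longrightarrow> derives \<Gamma> (Imp (Neg (Dia \<phi>)) (Neg (Dia \<chi>)))"

record ('w, 'a) cmodel =
  W :: "'w set"
  le :: "'w \<Rightarrow> 'w \<Rightarrow> bool"
  RBp :: "'w \<Rightarrow> 'w \<Rightarrow> bool"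
  RBm :: "'w \<Rightarrow> 'w \<Rightarrow> bool"
  RDp :: "'w \<Rightarrow> 'w \<Rightarrow> bool"
  RDm :: "'w \<Rightarrow> 'w \<Rightarrow> bool"
  vp :: "'a \<Rightarrow> 'w set"
  vm :: "'a \<Rightarrow> 'w set"

definition CN4K_model :: "('w, 'a) cmodel \<Rightarrow> bool" where
  "CN4K_model M \<longleftrightarrow> W M \<noteq> {}
     \<and> (\<forall>w\<in>W M. le M w w)
     \<and> (\<forall>u\<in>W M. \<forall>v\<in>W M. \<forall>w\<in>W M. le M u v \<and> le M v w \<longrightarrow> le M u w)
     \<and> (\<forall>p. vp M p \<subseteq> W M \<and> vm M p \<subseteq> W M)
     \<and> (\<forall>p. \<forall>u\<in>W M. \<forall>v\<in>W M. le M u v \<and> u \<in> vp M p \<longrightarrow> v \<in> vp M p)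
     \<and> (\<forall>p. \<forall>u\<in>W M. \<forall>v\<in>W M. le M u v \<and> u \<in> vm M p \<longrightarrow> v \<in> vm M p)"

text \<open>forces M True w \<phi> is positive support, forces M False w \<phi> negative support.
  All quantifiers range over the state set W M.\<close>
fun forces :: "('w, 'a) cmodel \<Rightarrow> bool \<Rightarrow> 'w \<Rightarrow> 'a fm \<Rightarrow> bool" where
  "forces M True w (Atom p) = (w \<in> vp M p)"
| "forces M False w (Atom p) = (w \<in> vm M p)"
| "forces M True w (Neg \<phi>) = forces M False w \<phi>"
| "forces M False w (Neg \<phi>) = forces M True w \<phi>"
| "forces M True w (Conj \<phi> \<chi>) = (forces M True w \<phi> \<and> forces M True w \<chi>)"
| "forces M False w (Conj \<phi> \<chi>) = (forces M False w \<phi> \<or> forces M False w \<chi>)"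
| "forces M True w (Disj \<phi> \<chi>) = (forces M True w \<phi> \<or> forces M True w \<chi>)"
| "forces M False w (Disj \<phi> \<chi>) = (forces M False w \<phi> \<and> forces M False w \<chi>)"
| "forces M True w (Imp \<phi> \<chi>) =
     (\<forall>w'\<in>W M. le M w w' \<longrightarrow> forces M True w' \<phi> \<longrightarrow> forces M True w' \<chi>)"
| "forces M False w (Imp \<phi> \<chi>) = (forces M True w \<phi> \<and> forces M False w \<chi>)"
| "forces M True w (Box \<phi>) =
     (\<forall>w'\<in>W M. le M w w' \<longrightarrow> (\<forall>w''\<in>W M. RBp M w' w'' \<longrightarrow> forces M True w'' \<phi>))"
| "forces M False w (Box \<phi>) =
     (\<forall>w'\<in>W M. le M w w' \<longrightarrow> (\<exists>w''\<in>W M. RBm M w' w'' \<and> forces M False w'' \<phi>))"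
| "forces M True w (Dia \<phi>) =
     (\<forall>w'\<in>W M. le M w w' \<longrightarrow> (\<exists>w''\<in>W M. RDp M w' w'' \<and> forces M True w'' \<phi>))"
| "forces M False w (Dia \<phi>) =
     (\<forall>w'\<in>W M. le M w w' \<longrightarrow> (\<forall>w''\<in>W M. RDm M w' w'' \<longrightarrow> forces M False w'' \<phi>))"

definition saturated :: "'a fm set \<Rightarrow> bool" where
  "saturated \<Xi> \<longleftrightarrow> (\<forall>\<phi>. derives \<Xi> \<phi> \<longrightarrow> \<phi> \<in> \<Xi>)
     \<and> (\<forall>\<xi> \<xi>'. Disj \<xi> \<xi>' \<in> \<Xi> \<longrightarrow> \<xi> \<in> \<Xi> \<or> \<xi>' \<in> \<Xi>)"

record 'a segment =
  hd_set :: "'a fm set"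
  PhiBp :: "'a fm set set"
  PhiBm :: "'a fm set set"
  PhiDp :: "'a fm set set"
  PhiDm :: "'a fm set set"

definition is_segment :: "'a segment \<Rightarrow> bool" where
  "is_segment s \<longleftrightarrow> saturated (hd_set s)
     \<and> (\<forall>\<Delta>\<in>PhiBp s. saturated \<Delta>) \<and> (\<forall>\<Delta>\<in>PhiBm s. saturated \<Delta>)
     \<and> (\<forall>\<Delta>\<in>PhiDp s. saturated \<Delta>) \<and> (\<forall>\<Delta>\<in>PhiDm s. saturated \<Delta>)
     \<and> (\<forall>\<phi>. Box \<phi> \<in> hd_set s \<longrightarrow> (\<forall>\<Delta>\<in>PhiBp s. \<phi> \<in> \<Delta>))
     \<and> (\<forall>\<phi>. Neg (Box \<phi>) \<in> hd_set s \<longrightarrow> (\<exists>\<Delta>\<in>PhiBm s. Neg \<phi> \<in> \<Delta>))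
     \<and> (\<forall>\<phi>. Dia \<phi> \<in> hd_set s \<longrightarrow> (\<exists>\<Delta>\<in>PhiDp s. \<phi> \<in> \<Delta>))
     \<and> (\<forall>\<phi>. Neg (Dia \<phi>) \<in> hd_set s \<longrightarrow> (\<forall>\<Delta>\<in>PhiDm s. Neg \<phi> \<in> \<Delta>))"

definition canonical :: "('a segment, 'a) cmodel" where
  "canonical = \<lparr> W = {s. is_segment s},
     le = (\<lambda>s s'. hd_set s \<subseteq> hd_set s'),
     RBp = (\<lambda>s s'. hd_set s' \<in> PhiBp s),
     RBm = (\<lambda>s s'. hd_set s' \<in> PhiBm s),
     RDp = (\<lambda>s s'. hd_set s' \<in> PhiDp s),
     RDm = (\<lambda>s s'. hd_set s' \<in> PhiDm s),
     vp = (\<lambda>p. {s. is_segment s \<and> Atom p \<in> hd_set s}),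
     vm = (\<lambda>p. {s. is_segment s \<and> Neg (Atom p) \<in> hd_set s}) \<rparr>"

end

theory Submission
  imports Defs
begin

(* Both polarities are proved together by induction on the formula.  The propositional
   cases are closure properties of saturated sets; the implication case extends the head
   plus the antecedent to a saturated set avoiding the consequent (Lindenbaum's lemma, via
   Zorn and compactness of derivability).  In each modal case a formula missing from the
   head is refuted by a new segment with the same head and freshly chosen successor sets.
   For Box phi this is one saturated extension of {psi | Box psi in the head} avoiding phi,
   which exists by K1, K3 and compactness; dually for ~Dia phi with K2 and K4.  For ~Box phi
   and Dia phi the successors are all saturated sets avoiding ~phi resp. phi, and the
   monotonicity rules provide enough of them.  The trivial set of all formulas is saturated
   and fills every component whose clause only asks for existence. *)

lemma derives_mono: "derives \<Gamma> \<phi> \<Longrightarrow> \<Gamma> \<subseteq> \<Gamma>' \<Longrightarrow> derives \<Gamma>' \<phi>"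
  by (induction arbitrary: \<Gamma>' rule: derives.induct) (auto intro: derives.intros)

lemma derives_theorem: "derives {} \<phi> \<Longrightarrow> derives \<Gamma> \<phi>"
  using derives_mono by blast

lemma derives_Imp_refl: "derives \<Gamma> (Imp \<phi> \<phi>)"
  by (meson A1 A2 derives.ax derives.mp)

lemma derives_weaken_Imp: "derives \<Gamma> \<chi> \<Longrightarrow> derives \<Gamma> (Imp \<phi> \<chi>)"
  by (rule derives.mp[OF derives.ax[OF A1]])

lemma derives_deduction: "derives (insert \<phi> \<Gamma>) \<chi> \<Longrightarrow> derives \<Gamma> (Imp \<phi> \<chi>)"
proof (induction "insert \<phi> \<Gamma>" \<chi> rule: derives.induct)
  case (hyp \<psi>)
  then show ?case
    by (cases "\<psi> = \<phi>") (auto intro: derives_Imp_refl derives_weaken_Imp derives.hyp)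
next
  case (mp \<psi> \<chi>)
  then show ?case by (meson A2 derives.ax derives.mp)
qed (auto intro: derives_weaken_Imp derives.intros)

lemma derives_compact: "derives \<Gamma> \<phi> \<Longrightarrow> \<exists>F. finite F \<and> F \<subseteq> \<Gamma> \<and> derives F \<phi>"
proof (induction rule: derives.induct)
  case (hyp \<phi> \<Gamma>)
  then show ?case by (intro exI[of _ "{\<phi>}"]) (auto intro: derives.hyp)
next
  case (mp \<Gamma> \<phi> \<chi>)
  then obtain F G where "finite F" "F \<subseteq> \<Gamma>" "derives F (Imp \<phi> \<chi>)"
    and "finite G" "G \<subseteq> \<Gamma>" "derives G \<phi>" by blast
  then show ?case
    by (intro exI[of _ "F \<union> G"]) (auto intro: derives.mp derives_mono)
qed (auto intro: derives.intros)

lemma derives_ConjD1: "derives \<Gamma> (Conj \<phi> \<chi>) \<Longrightarrow> derives \<Gamma> \<phi>"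
  by (rule derives.mp[OF derives.ax[OF A3]])

lemma derives_ConjD2: "derives \<Gamma> (Conj \<phi> \<chi>) \<Longrightarrow> derives \<Gamma> \<chi>"
  by (rule derives.mp[OF derives.ax[OF A4]])

lemma derives_ConjI: "derives \<Gamma> \<phi> \<Longrightarrow> derives \<Gamma> \<chi> \<Longrightarrow> derives \<Gamma> (Conj \<phi> \<chi>)"
  by (rule derives.mp[OF derives.mp[OF derives.ax[OF A5]]])

lemma derives_DisjI1: "derives \<Gamma> \<phi> \<Longrightarrow> derives \<Gamma> (Disj \<phi> \<chi>)"
  by (rule derives.mp[OF derives.ax[OF A6]])

lemma derives_DisjI2: "derives \<Gamma> \<chi> \<Longrightarrow> derives \<Gamma> (Disj \<phi> \<chi>)"
  by (rule derives.mp[OF derives.ax[OF A7]])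

lemma derives_IffD1: "Ax (Iff \<phi> \<chi>) \<Longrightarrow> derives \<Gamma> \<phi> \<Longrightarrow> derives \<Gamma> \<chi>"
  unfolding Iff_def by (rule derives.mp[OF derives_ConjD1[OF derives.ax]])

lemma derives_IffD2: "Ax (Iff \<phi> \<chi>) \<Longrightarrow> derives \<Gamma> \<chi> \<Longrightarrow> derives \<Gamma> \<phi>"
  unfolding Iff_def by (rule derives.mp[OF derives_ConjD2[OF derives.ax]])

lemma saturated_UNIV: "saturated UNIV"
  unfolding saturated_def by blast

lemma saturated_derives_mem: "saturated \<Xi> \<Longrightarrow> derives \<Xi> \<phi> \<Longrightarrow> \<phi> \<in> \<Xi>"
  unfolding saturated_def by blast

lemma saturated_theorem_mem: "saturated \<Xi> \<Longrightarrow> derives {} \<phi> \<Longrightarrow> \<phi> \<in> \<Xi>"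
  using saturated_derives_mem derives_theorem by blast

lemma saturated_mp: "saturated \<Xi> \<Longrightarrow> Imp \<phi> \<chi> \<in> \<Xi> \<Longrightarrow> \<phi> \<in> \<Xi> \<Longrightarrow> \<chi> \<in> \<Xi>"
  by (meson derives.hyp derives.mp saturated_derives_mem)

lemma saturated_theorem_mp: "saturated \<Xi> \<Longrightarrow> derives {} (Imp \<phi> \<chi>) \<Longrightarrow> \<phi> \<in> \<Xi> \<Longrightarrow> \<chi> \<in> \<Xi>"
  using saturated_mp saturated_theorem_mem by blast

lemma saturated_Iff_axiom: "saturated \<Xi> \<Longrightarrow> Ax (Iff \<phi> \<chi>) \<Longrightarrow> \<phi> \<in> \<Xi> \<longleftrightarrow> \<chi> \<in> \<Xi>"
  by (meson derives.hyp derives_IffD1 derives_IffD2 saturated_derives_mem)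

lemma saturated_Conj_iff: "saturated \<Xi> \<Longrightarrow> Conj \<phi> \<chi> \<in> \<Xi> \<longleftrightarrow> \<phi> \<in> \<Xi> \<and> \<chi> \<in> \<Xi>"
  by (meson derives.hyp derives_ConjD1 derives_ConjD2 derives_ConjI saturated_derives_mem)

lemma saturated_Disj_iff: "saturated \<Xi> \<Longrightarrow> Disj \<phi> \<chi> \<in> \<Xi> \<longleftrightarrow> \<phi> \<in> \<Xi> \<or> \<chi> \<in> \<Xi>"
  unfolding saturated_def by (meson derives.hyp derives_DisjI1 derives_DisjI2)

lemma saturated_Neg_Neg_iff: "saturated \<Xi> \<Longrightarrow> Neg (Neg \<phi>) \<in> \<Xi> \<longleftrightarrow> \<phi> \<in> \<Xi>"
  using saturated_Iff_axiom[OF _ A9] by blast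

lemma saturated_Neg_Conj_iff:
  "saturated \<Xi> \<Longrightarrow> Neg (Conj \<phi> \<chi>) \<in> \<Xi> \<longleftrightarrow> Neg \<phi> \<in> \<Xi> \<or> Neg \<chi> \<in> \<Xi>"
  using saturated_Iff_axiom[OF _ A10] saturated_Disj_iff by blast

lemma saturated_Neg_Disj_iff:
  "saturated \<Xi> \<Longrightarrow> Neg (Disj \<phi> \<chi>) \<in> \<Xi> \<longleftrightarrow> Neg \<phi> \<in> \<Xi> \<and> Neg \<chi> \<in> \<Xi>"
  using saturated_Iff_axiom[OF _ A11] saturated_Conj_iff by blast

lemma saturated_Neg_Imp_iff:
  "saturated \<Xi> \<Longrightarrow> Neg (Imp \<phi> \<chi>) \<in> \<Xi> \<longleftrightarrow> \<phi> \<in> \<Xi> \<and> Neg \<chi> \<in> \<Xi>"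
  using saturated_Iff_axiom[OF _ A12] saturated_Conj_iff by blast

lemma saturated_if_maximal_nonderiving:
  assumes nonderiving: "\<not> derives M \<chi>"
    and maximal: "\<And>\<phi>. \<phi> \<notin> M \<Longrightarrow> derives (insert \<phi> M) \<chi>"
  shows "saturated M"
proof -
  have Imp_derivable: "derives M (Imp \<phi> \<chi>)" if "\<phi> \<notin> M" for \<phi>
    using maximal[OF that] by (rule derives_deduction)
  have "\<phi> \<in> M" if "derives M \<phi>" for \<phi>
    using nonderiving derives.mp[OF Imp_derivable that] by blast
  moreover have "\<phi> \<in> M \<or> \<psi> \<in> M" if "Disj \<phi> \<psi> \<in> M" for \<phi> \<psi>
  proof (rule ccontr)
    assume "\<not> (\<phi> \<in> M \<or> \<psi> \<in> M)"
    then have "derives M (Imp \<phi> \<chi>)" "derives M (Imp \<psi> \<chi>)"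
      using Imp_derivable by auto
    then have "derives M (Imp (Disj \<phi> \<psi>) \<chi>)"
      by (meson A8 derives.ax derives.mp)
    with nonderiving show False
      using derives.hyp[OF that] derives.mp by blast
  qed
  ultimately show ?thesis
    unfolding saturated_def by blast
qed

lemma lindenbaum:
  assumes "\<not> derives \<Delta> \<chi>"
  obtains \<Gamma> where "\<Delta> \<subseteq> \<Gamma>" "saturated \<Gamma>" "\<chi> \<notin> \<Gamma>"
proof -
  let ?A = "{\<Gamma>. \<Delta> \<subseteq> \<Gamma> \<and> \<not> derives \<Gamma> \<chi>}"
  have chain_Union: "\<Union>C \<in> ?A" if chain: "C \<noteq> {}" "subset.chain ?A C" for C
  proof -
    have "\<not> derives (\<Union>C) \<chi>"
    proof
      assume "derives (\<Union>C) \<chi>"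
      then obtain F where F: "finite F" "F \<subseteq> \<Union>C" "derives F \<chi>"
        using derives_compact by blast
      then obtain \<Gamma> where "\<Gamma> \<in> C" "F \<subseteq> \<Gamma>"
        using finite_subset_Union_chain chain by metis
      then have "derives \<Gamma> \<chi>" and "\<Gamma> \<in> ?A"
        using derives_mono[OF F(3)] chain(2) unfolding subset.chain_def by auto
      then show False
        by simp
    qed
    moreover have "\<Delta> \<subseteq> \<Union>C"
      using chain unfolding subset.chain_def by blast
    ultimately show ?thesis
      by simp
  qed
  have "?A \<noteq> {}"
    using assms by blast
  then obtain M where "M \<in> ?A" and maximal: "\<forall>\<Gamma>\<in>?A. M \<subseteq> \<Gamma> \<longrightarrow> \<Gamma> = M"
    using subset_Zorn_nonempty[OF _ chain_Union] by blast
  have "saturated M"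
  proof (rule saturated_if_maximal_nonderiving)
    show "\<not> derives M \<chi>"
      using \<open>M \<in> ?A\<close> by simp
    show "derives (insert \<phi> M) \<chi>" if "\<phi> \<notin> M" for \<phi>
      using maximal[rule_format, of "insert \<phi> M"] \<open>M \<in> ?A\<close> that by blast
  qed
  moreover have "\<chi> \<notin> M"
    using \<open>M \<in> ?A\<close> derives.hyp by auto
  ultimately show ?thesis
    using that \<open>M \<in> ?A\<close> by blast
qed

lemma saturated_Box_closed:
  assumes sat: "saturated \<Xi>" and "derives {\<psi>. Box \<psi> \<in> \<Xi>} \<chi>"
  shows "Box \<chi> \<in> \<Xi>"
proof -
  have "Box \<chi> \<in> \<Xi>" if "finite F" "F \<subseteq> {\<psi>. Box \<psi> \<in> \<Xi>}" "derives F \<chi>" for F \<chi>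
    using that
  proof (induction F arbitrary: \<chi> rule: finite_induct)
    case empty
    then have "derives {} (Imp (Box (Imp \<chi> \<chi>)) (Box \<chi>))"
      by (intro derives.RBoxP derives_weaken_Imp)
    moreover have "Box (Imp \<chi> \<chi>) \<in> \<Xi>"
      using saturated_theorem_mem[OF sat derives.ax[OF K1]] .
    ultimately show ?case
      using saturated_theorem_mp[OF sat] by blast
  next
    case (insert \<psi> F)
    then have "Box (Imp \<psi> \<chi>) \<in> \<Xi>" and "Box \<psi> \<in> \<Xi>"
      by (simp_all add: derives_deduction)
    then have "Box (Conj (Imp \<psi> \<chi>) \<psi>) \<in> \<Xi>"
      using saturated_theorem_mp[OF sat derives.ax[OF K3]] saturated_Conj_iff[OF sat] by blast
    moreover have "derives {} (Imp (Conj (Imp \<psi> \<chi>) \<psi>) \<chi>)"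
    proof (rule derives_deduction)
      have "derives {Conj (Imp \<psi> \<chi>) \<psi>} (Conj (Imp \<psi> \<chi>) \<psi>)"
        by (simp add: derives.hyp)
      then show "derives (insert (Conj (Imp \<psi> \<chi>) \<psi>) {}) \<chi>"
        by (meson derives.mp derives_ConjD1 derives_ConjD2)
    qed
    ultimately show ?case
      using saturated_theorem_mp[OF sat derives.RBoxP] by blast
  qed
  then show ?thesis
    using derives_compact[OF assms(2)] by blast
qed

lemma saturated_Neg_Dia_closed:
  assumes sat: "saturated \<Xi>" and "derives {Neg \<psi> | \<psi>. Neg (Dia \<psi>) \<in> \<Xi>} (Neg \<theta>)"
  shows "Neg (Dia \<theta>) \<in> \<Xi>"
proof -
  have "Neg (Dia \<theta>) \<in> \<Xi>"
    if "finite F" "F \<subseteq> {Neg \<psi> | \<psi>. Neg (Dia \<psi>) \<in> \<Xi>}" "derives F (Neg \<theta>)" for F \<theta>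
    using that
  proof (induction F arbitrary: \<theta> rule: finite_induct)
    case empty
    then have "derives {} (Imp (Neg (Dia (Neg (Imp \<theta> \<theta>)))) (Neg (Dia \<theta>)))"
      by (intro derives.RDiaN derives_weaken_Imp)
    moreover have "Neg (Dia (Neg (Imp \<theta> \<theta>))) \<in> \<Xi>"
      using saturated_theorem_mem[OF sat derives.ax[OF K2]] .
    ultimately show ?case
      using saturated_theorem_mp[OF sat] by blast
  next
    case (insert x F)
    then obtain \<psi> where x: "x = Neg \<psi>" and "Neg (Dia \<psi>) \<in> \<Xi>"
      by blast
    \<comment> \<open>By A9, ~?X is interchangeable with ~psi \<rightarrow> ~theta, which F derives.\<close>
    let ?X = "Neg (Imp (Neg \<psi>) (Neg \<theta>))"
    have "derives F (Neg ?X)"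
      using insert.prems(2) x by (auto intro: derives_IffD2[OF A9] derives_deduction)
    then have "Neg (Dia ?X) \<in> \<Xi>"
      using insert by blast
    with \<open>Neg (Dia \<psi>) \<in> \<Xi>\<close> have "Neg (Dia (Disj ?X \<psi>)) \<in> \<Xi>"
      using saturated_theorem_mp[OF sat derives.ax[OF K4]] saturated_Conj_iff[OF sat] by blast
    moreover have "derives {} (Imp (Neg (Disj ?X \<psi>)) (Neg \<theta>))"
    proof (rule derives_deduction)
      let ?G = "{Neg (Disj ?X \<psi>)}"
      have "derives ?G (Conj (Neg ?X) (Neg \<psi>))"
        by (rule derives_IffD1[OF A11]) (simp add: derives.hyp)
      then show "derives (insert (Neg (Disj ?X \<psi>)) {}) (Neg \<theta>)"
        by (meson A9 derives.mp derives_ConjD1 derives_ConjD2 derives_IffD1)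
    qed
    ultimately show ?case
      using saturated_theorem_mp[OF sat derives.RDiaN] by blast
  qed
  then show ?thesis
    using derives_compact[OF assms(2)] by blast
qed

lemma canonical_simps:
  "W canonical = {s. is_segment s}"
  "le canonical s t \<longleftrightarrow> hd_set s \<subseteq> hd_set t"
  "RBp canonical s t \<longleftrightarrow> hd_set t \<in> PhiBp s"
  "RBm canonical s t \<longleftrightarrow> hd_set t \<in> PhiBm s"
  "RDp canonical s t \<longleftrightarrow> hd_set t \<in> PhiDp s"
  "RDm canonical s t \<longleftrightarrow> hd_set t \<in> PhiDm s"
  "vp canonical p = {s. is_segment s \<and> Atom p \<in> hd_set s}"
  "vm canonical p = {s. is_segment s \<and> Neg (Atom p) \<in> hd_set s}"
  by (simp_all add: canonical_def)

lemma segment_saturated: "is_segment s \<Longrightarrow> saturated (hd_set s)"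
  by (simp add: is_segment_def)

lemma segment_Box: "is_segment s \<Longrightarrow> Box \<phi> \<in> hd_set s \<Longrightarrow> \<Delta> \<in> PhiBp s \<Longrightarrow> \<phi> \<in> \<Delta>"
  by (simp add: is_segment_def)

lemma segment_Neg_Box:
  "is_segment s \<Longrightarrow> Neg (Box \<phi>) \<in> hd_set s \<Longrightarrow> \<exists>\<Delta>\<in>PhiBm s. saturated \<Delta> \<and> Neg \<phi> \<in> \<Delta>"
  by (simp add: is_segment_def)

lemma segment_Dia:
  "is_segment s \<Longrightarrow> Dia \<phi> \<in> hd_set s \<Longrightarrow> \<exists>\<Delta>\<in>PhiDp s. saturated \<Delta> \<and> \<phi> \<in> \<Delta>"
  by (simp add: is_segment_def)

lemma segment_Neg_Dia:
  "is_segment s \<Longrightarrow> Neg (Dia \<phi>) \<in> hd_set s \<Longrightarrow> \<Delta> \<in> PhiDm s \<Longrightarrow> Neg \<phi> \<in> \<Delta>"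
  by (simp add: is_segment_def)

lemma saturated_segment_head:
  assumes "saturated \<Xi>"
  obtains s where "is_segment s" "hd_set s = \<Xi>"
proof
  show "is_segment \<lparr>hd_set = \<Xi>, PhiBp = {}, PhiBm = {UNIV}, PhiDp = {UNIV}, PhiDm = {}\<rparr>"
    using assms unfolding is_segment_def by (simp add: saturated_UNIV)
qed simp

lemma forces_canonical_Imp:
  assumes IH: "\<And>t. is_segment t \<Longrightarrow> forces canonical True t \<phi> \<longleftrightarrow> \<phi> \<in> hd_set t"
      "\<And>t. is_segment t \<Longrightarrow> forces canonical True t \<chi> \<longleftrightarrow> \<chi> \<in> hd_set t"
    and s: "is_segment s"
  shows "forces canonical True s (Imp \<phi> \<chi>) \<longleftrightarrow> Imp \<phi> \<chi> \<in> hd_set s"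
proof
  assume "Imp \<phi> \<chi> \<in> hd_set s"
  then show "forces canonical True s (Imp \<phi> \<chi>)"
    using IH by (auto simp: canonical_simps intro: saturated_mp[OF segment_saturated])
next
  assume forced: "forces canonical True s (Imp \<phi> \<chi>)"
  show "Imp \<phi> \<chi> \<in> hd_set s"
  proof (rule ccontr)
    assume "Imp \<phi> \<chi> \<notin> hd_set s"
    then have "\<not> derives (insert \<phi> (hd_set s)) \<chi>"
      using derives_deduction saturated_derives_mem segment_saturated[OF s] by blast
    then obtain \<Gamma> where \<Gamma>: "insert \<phi> (hd_set s) \<subseteq> \<Gamma>" "saturated \<Gamma>" "\<chi> \<notin> \<Gamma>"
      by (rule lindenbaum)
    then obtain w where "is_segment w" "hd_set w = \<Gamma>"
      by (meson saturated_segment_head)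
    with forced \<Gamma> show False
      using IH by (auto simp: canonical_simps)
  qed
qed

lemma forces_canonical_Box:
  assumes IH: "\<And>t. is_segment t \<Longrightarrow> forces canonical True t \<phi> \<longleftrightarrow> \<phi> \<in> hd_set t"
    and s: "is_segment s"
  shows "forces canonical True s (Box \<phi>) \<longleftrightarrow> Box \<phi> \<in> hd_set s"
proof
  assume "Box \<phi> \<in> hd_set s"
  then show "forces canonical True s (Box \<phi>)"
    using IH by (auto simp: canonical_simps intro: segment_Box)
next
  assume forced: "forces canonical True s (Box \<phi>)"
  show "Box \<phi> \<in> hd_set s"
  proof (rule ccontr)
    assume "Box \<phi> \<notin> hd_set s"
    then have "\<not> derives {\<psi>. Box \<psi> \<in> hd_set s} \<phi>"
      using saturated_Box_closed segment_saturated[OF s] by blast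
    then obtain \<Delta> where \<Delta>: "{\<psi>. Box \<psi> \<in> hd_set s} \<subseteq> \<Delta>" "saturated \<Delta>" "\<phi> \<notin> \<Delta>"
      by (rule lindenbaum)
    define w where "w = \<lparr>hd_set = hd_set s, PhiBp = {\<Delta>}, PhiBm = {UNIV}, PhiDp = {UNIV}, PhiDm = {}\<rparr>"
    have "is_segment w"
      using s \<Delta> unfolding w_def is_segment_def by (auto simp: saturated_UNIV)
    moreover obtain u where "is_segment u" "hd_set u = \<Delta>"
      using \<open>saturated \<Delta>\<close> by (rule saturated_segment_head)
    ultimately have "\<phi> \<in> \<Delta>"
      using forced IH by (auto simp: canonical_simps w_def)
    with \<open>\<phi> \<notin> \<Delta>\<close> show False ..
  qed
qed

lemma forces_canonical_Neg_Box:
  assumes IH: "\<And>t. is_segment t \<Longrightarrow> forces canonical False t \<phi> \<longleftrightarrow> Neg \<phi> \<in> hd_set t"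
    and s: "is_segment s"
  shows "forces canonical False s (Box \<phi>) \<longleftrightarrow> Neg (Box \<phi>) \<in> hd_set s"
proof
  assume "Neg (Box \<phi>) \<in> hd_set s"
  then have "\<exists>\<Delta>\<in>PhiBm w. saturated \<Delta> \<and> Neg \<phi> \<in> \<Delta>"
    if "is_segment w" "hd_set s \<subseteq> hd_set w" for w
    using segment_Neg_Box that by blast
  then show "forces canonical False s (Box \<phi>)"
    using IH by (auto simp: canonical_simps) (metis saturated_segment_head)
next
  assume forced: "forces canonical False s (Box \<phi>)"
  show "Neg (Box \<phi>) \<in> hd_set s"
  proof (rule ccontr)
    assume notin: "Neg (Box \<phi>) \<notin> hd_set s"
    have "\<exists>\<Delta>. saturated \<Delta> \<and> Neg \<phi> \<notin> \<Delta> \<and> Neg \<psi> \<in> \<Delta>" if "Neg (Box \<psi>) \<in> hd_set s" for \<psi>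
    proof -
      have "\<not> derives {Neg \<psi>} (Neg \<phi>)"
      proof
        assume "derives {Neg \<psi>} (Neg \<phi>)"
        then have "derives {} (Imp (Neg (Box \<psi>)) (Neg (Box \<phi>)))"
          by (intro derives.RBoxN derives_deduction)
        with notin that show False
          using saturated_theorem_mp segment_saturated[OF s] by blast
      qed
      then show ?thesis
        by (meson insert_subset lindenbaum)
    qed
    then have "is_segment
        \<lparr>hd_set = hd_set s, PhiBp = {}, PhiBm = {\<Delta>. saturated \<Delta> \<and> Neg \<phi> \<notin> \<Delta>}, PhiDp = {UNIV}, PhiDm = {}\<rparr>"
      using s unfolding is_segment_def by (auto simp: saturated_UNIV)
    then show False
      using forced IH by (auto simp: canonical_simps)
  qed
qed

lemma forces_canonical_Dia:
  assumes IH: "\<And>t. is_segment t \<Longrightarrow> forces canonical True t \<phi> \<longleftrightarrow> \<phi> \<in> hd_set t"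
    and s: "is_segment s"
  shows "forces canonical True s (Dia \<phi>) \<longleftrightarrow> Dia \<phi> \<in> hd_set s"
proof
  assume "Dia \<phi> \<in> hd_set s"
  then have "\<exists>\<Delta>\<in>PhiDp w. saturated \<Delta> \<and> \<phi> \<in> \<Delta>"
    if "is_segment w" "hd_set s \<subseteq> hd_set w" for w
    using segment_Dia that by blast
  then show "forces canonical True s (Dia \<phi>)"
    using IH by (auto simp: canonical_simps) (metis saturated_segment_head)
next
  assume forced: "forces canonical True s (Dia \<phi>)"
  show "Dia \<phi> \<in> hd_set s"
  proof (rule ccontr)
    assume notin: "Dia \<phi> \<notin> hd_set s"
    have "\<exists>\<Delta>. saturated \<Delta> \<and> \<phi> \<notin> \<Delta> \<and> \<psi> \<in> \<Delta>" if "Dia \<psi> \<in> hd_set s" for \<psi>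
    proof -
      have "\<not> derives {\<psi>} \<phi>"
      proof
        assume "derives {\<psi>} \<phi>"
        then have "derives {} (Imp (Dia \<psi>) (Dia \<phi>))"
          by (intro derives.RDiaP derives_deduction)
        with notin that show False
          using saturated_theorem_mp segment_saturated[OF s] by blast
      qed
      then show ?thesis
        by (meson insert_subset lindenbaum)
    qed
    then have "is_segment
        \<lparr>hd_set = hd_set s, PhiBp = {}, PhiBm = {UNIV}, PhiDp = {\<Delta>. saturated \<Delta> \<and> \<phi> \<notin> \<Delta>}, PhiDm = {}\<rparr>"
      using s unfolding is_segment_def by (auto simp: saturated_UNIV)
    then show False
      using forced IH by (auto simp: canonical_simps)
  qed
qed

lemma forces_canonical_Neg_Dia:
  assumes IH: "\<And>t. is_segment t \<Longrightarrow> forces canonical False t \<phi> \<longleftrightarrow> Neg \<phi> \<in> hd_set t"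
    and s: "is_segment s"
  shows "forces canonical False s (Dia \<phi>) \<longleftrightarrow> Neg (Dia \<phi>) \<in> hd_set s"
proof
  assume "Neg (Dia \<phi>) \<in> hd_set s"
  then show "forces canonical False s (Dia \<phi>)"
    using IH by (auto simp: canonical_simps intro: segment_Neg_Dia)
next
  assume forced: "forces canonical False s (Dia \<phi>)"
  show "Neg (Dia \<phi>) \<in> hd_set s"
  proof (rule ccontr)
    assume "Neg (Dia \<phi>) \<notin> hd_set s"
    then have "\<not> derives {Neg \<psi> | \<psi>. Neg (Dia \<psi>) \<in> hd_set s} (Neg \<phi>)"
      using saturated_Neg_Dia_closed segment_saturated[OF s] by blast
    then obtain \<Delta> where
      \<Delta>: "{Neg \<psi> | \<psi>. Neg (Dia \<psi>) \<in> hd_set s} \<subseteq> \<Delta>" "saturated \<Delta>" "Neg \<phi> \<notin> \<Delta>"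
      by (rule lindenbaum)
    define w where "w = \<lparr>hd_set = hd_set s, PhiBp = {}, PhiBm = {UNIV}, PhiDp = {UNIV}, PhiDm = {\<Delta>}\<rparr>"
    have "is_segment w"
      using s \<Delta> unfolding w_def is_segment_def by (auto simp: saturated_UNIV)
    moreover obtain u where "is_segment u" "hd_set u = \<Delta>"
      using \<open>saturated \<Delta>\<close> by (rule saturated_segment_head)
    ultimately have "Neg \<phi> \<in> \<Delta>"
      using forced IH by (auto simp: canonical_simps w_def)
    with \<open>Neg \<phi> \<notin> \<Delta>\<close> show False ..
  qed
qed

theorem lemma2:
  fixes \<phi> :: "('a::countable) fm" and s :: "'a segment"
  assumes "is_segment s"
  shows "(forces canonical True s \<phi> \<longleftrightarrow> \<phi> \<in> hd_set s)
       \<and> (forces canonical False s \<phi> \<longleftrightarrow> Neg \<phi> \<in> hd_set s)"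
  using assms
proof (induction \<phi> arbitrary: s)
  case (Atom p)
  then show ?case by (simp add: canonical_simps)
next
  case (Neg \<phi>)
  then show ?case by (simp add: saturated_Neg_Neg_iff segment_saturated)
next
  case (Conj \<phi> \<chi>)
  then show ?case by (simp add: saturated_Conj_iff saturated_Neg_Conj_iff segment_saturated)
next
  case (Disj \<phi> \<chi>)
  then show ?case by (simp add: saturated_Disj_iff saturated_Neg_Disj_iff segment_saturated)
next
  case (Imp \<phi> \<chi>)
  then show ?case
    using forces_canonical_Imp[of \<phi> \<chi> s] by (simp add: saturated_Neg_Imp_iff segment_saturated)
next
  case (Box \<phi>)
  then show ?case
    using forces_canonical_Box[of \<phi> s] forces_canonical_Neg_Box[of \<phi> s] by blast
next
  case (Dia \<phi>)
  then show ?case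
    using forces_canonical_Dia[of \<phi> s] forces_canonical_Neg_Dia[of \<phi> s] by blast
qed

end
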